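(* Let $H$ be a balanced graph and let $d \in \mathbb{N}$. If $F \subsetneq H_d$ is a proper subgraph of $H_d$ whose vertex set contains both endpoints of the root of $H_d$, then $e(F) \leqslant \big(v(F) - 2\big)\lambda(H)$.
   Context: $H$ is a graph with $v(H) \geqslant 4$; it is balanced if $e(H) \geqslant 2v(H)-2$ and $\frac{e(F)-1}{v(F)-2} \leqslant \lambda(H) := \frac{e(H)-2}{v(H)-2}$ for every proper subgraph $F \subsetneq H$ with $v(F) \geqslant 3$. The graph $H_d$: choose a sequence of edges $(e_1, e_2, \ldots)$ of $H$ such that $e_j$ and $e_{j+1}$ share no endpoint for every $j$. Take copies $H^{(1)}, \ldots, H^{(d)}$ of $H$ and, for each $1 \leqslant j \leqslant d-1$, identify the endpoints of $e_{j+1}$ in $H^{(j)}$ with the endpoints of $e_{j+1}$ in $H^{(j+1)}$. Then remove $e_1$ from $H^{(1)}$ and, for each $1 \leqslant j \leqslant d-1$, remove the shared edge $e_{j+1}$ of $H^{(j)} \cap H^{(j+1)}$. The root of $H_d$ is the pair of endpoints of $e_1$ in $H^{(1)}$. (Any such choice of edge sequence is allowed.) *)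

theory Defs
  imports Complex_Main
begin

type_synonym 'a graph = "'a set \<times> 'a set set"

definition is_graph :: "'a graph \<Rightarrow> bool" where
  "is_graph G \<longleftrightarrow> finite (fst G) \<and> (\<forall>f\<in>snd G. f \<subseteq> fst G \<and> card f = 2)"

definition nv :: "'a graph \<Rightarrow> nat" where "nv G = card (fst G)"
definition ne :: "'a graph \<Rightarrow> nat" where "ne G = card (snd G)"

definition subgraph :: "'a graph \<Rightarrow> 'a graph \<Rightarrow> bool" where
  "subgraph F G \<longleftrightarrow> fst F \<subseteq> fst G \<and> snd F \<subseteq> snd G \<and> (\<forall>f\<in>snd F. f \<subseteq> fst F)"

definition lam :: "'a graph \<Rightarrow> real" where
  "lam H = (real (ne H) - 2) / (real (nv H) - 2)"

definition balanced :: "'a graph \<Rightarrow> bool" where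
  "balanced H \<longleftrightarrow> is_graph H \<and> nv H \<ge> 4 \<and> real (ne H) \<ge> 2 * real (nv H) - 2 \<and>
     (\<forall>F. subgraph F H \<and> F \<noteq> H \<and> nv F \<ge> 3 \<longrightarrow>
          (real (ne F) - 1) / (real (nv F) - 2) \<le> lam H)"

definition edge_seq :: "'a graph \<Rightarrow> (nat \<Rightarrow> 'a set) \<Rightarrow> bool" where
  "edge_seq H es \<longleftrightarrow> (\<forall>j\<ge>1. es j \<in> snd H) \<and> (\<forall>j\<ge>1. es j \<inter> es (Suc j) = {})"

(* vertex x of copy j (1 <= j <= d); the endpoints of e_j in copy j (j >= 2)
   are identified with the same endpoints in copy j-1 *)
definition glue :: "(nat \<Rightarrow> 'a set) \<Rightarrow> nat \<Rightarrow> 'a \<Rightarrow> nat \<times> 'a" where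
  "glue es j x = (if 2 \<le> j \<and> x \<in> es j then (j - 1, x) else (j, x))"

definition Hd :: "'a graph \<Rightarrow> (nat \<Rightarrow> 'a set) \<Rightarrow> nat \<Rightarrow> (nat \<times> 'a) graph" where
  "Hd H es d =
     ({glue es j x | j x. j \<in> {1..d} \<and> x \<in> fst H},
      {glue es j ` f | j f. j \<in> {1..d} \<and> f \<in> snd H \<and> \<not> (j = 1 \<and> f = es 1)
          \<and> \<not> (2 \<le> j \<and> f = es j) \<and> \<not> (j < d \<and> f = es (Suc j))})"

definition root :: "(nat \<Rightarrow> 'a set) \<Rightarrow> (nat \<times> 'a) set" where
  "root es = Pair 1 ` es 1"

end

theory Submission
  imports Defs
begin

text \<open>Write \<open>s(F) = (v(F) - 2) \<lambda>(H) - e(F)\<close> for the slack of \<open>F\<close>. By induction on \<open>d\<close>, every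
  \<open>F \<subseteq> H\<^sub>d\<close> containing the root has \<open>s(F) \<ge> -1\<close>, and \<open>s(F) \<ge> 0\<close> unless \<open>F = H\<^sub>d\<close>. Passing to
  \<open>H\<^sub>d\<^sub>+\<^sub>1\<close>, the slack of \<open>F\<close> is that of its part in \<open>H\<^sub>d\<close> plus that of its trace on the new copy
  of \<open>H - e\<^sub>d\<^sub>+\<^sub>1\<close>, whose vertices on \<open>e\<^sub>d\<^sub>+\<^sub>1\<close> are already counted. Balancedness bounds the
  trace's slack below by \<open>-1\<close>, with equality only for the full copy, and the edge \<open>e\<^sub>d\<^sub>+\<^sub>1\<close> of
  \<open>H\<^sub>d\<close>, missing from \<open>H\<^sub>d\<^sub>+\<^sub>1\<close>, supplies the unit of slack that pays for it.\<close>

definition slack :: "'a graph \<Rightarrow> 'b graph \<Rightarrow> real" where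
  "slack H F = (real (nv F) - 2) * lam H - real (ne F)"

text \<open>Slack of a copy \<open>P\<close> of part of \<open>H - e\<close> glued along \<open>e\<close>: its vertices on \<open>e\<close> are not counted.\<close>
definition copy_slack :: "'a graph \<Rightarrow> 'a set \<Rightarrow> 'a graph \<Rightarrow> real" where
  "copy_slack H e P = (real (nv P) - real (card (fst P \<inter> e))) * lam H - real (ne P)"

lemma is_graph_finite_edges: "is_graph H \<Longrightarrow> finite (snd H)"
  unfolding is_graph_def by (meson Pow_iff finite_Pow_iff rev_finite_subset subsetI)

lemma edge_seq_edge:
  assumes "is_graph H" "edge_seq H es" "j \<ge> 1"
  shows "es j \<in> snd H" "es j \<subseteq> fst H" "card (es j) = 2"
  using assms unfolding is_graph_def edge_seq_def by auto

lemma subgraph_finite: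
  assumes "subgraph F G" "finite (fst G)"
  shows "finite (fst F)" "finite (snd F)"
proof -
  show fin: "finite (fst F)" using assms unfolding subgraph_def by (meson finite_subset)
  have "snd F \<subseteq> Pow (fst F)" using assms unfolding subgraph_def by auto
  then show "finite (snd F)" using fin by (meson finite_Pow_iff finite_subset)
qed

lemma balanced_lam_ge_2:
  assumes "balanced H" shows "lam H \<ge> 2"
proof -
  have "real (nv H) \<ge> 4" "real (ne H) \<ge> 2 * real (nv H) - 2"
    using assms unfolding balanced_def by auto
  then show ?thesis unfolding lam_def by (simp add: le_divide_eq)
qed

lemma edges_of_small_subgraph:
  assumes "is_graph H" "subgraph Q H" "nv Q \<le> 2"
  shows "snd Q \<subseteq> {fst Q}" and "snd Q \<noteq> {} \<Longrightarrow> nv Q = 2"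
proof -
  have fin: "finite (fst Q)" using subgraph_finite assms(1,2) unfolding is_graph_def by blast
  have edge: "f \<subseteq> fst Q \<and> card f = 2" if "f \<in> snd Q" for f
    using that assms(1,2) unfolding subgraph_def is_graph_def by auto
  have "f = fst Q \<and> nv Q = 2" if "f \<in> snd Q" for f
    using edge[OF that] card_mono[OF fin] card_subset_eq[OF fin] assms(3)
    unfolding nv_def by (metis antisym)
  then show "snd Q \<subseteq> {fst Q}" and "snd Q \<noteq> {} \<Longrightarrow> nv Q = 2" by blast+
qed

text \<open>With two vertices this is the trivial bound \<open>e(Q) \<le> 1\<close>.\<close>
lemma balanced_subgraph_bound:
  assumes "balanced H" "subgraph Q H" "Q \<noteq> H" "nv Q \<ge> 2"
  shows "real (ne Q) - 1 \<le> (real (nv Q) - 2) * lam H"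
proof (cases "nv Q \<ge> 3")
  case True
  then have "(real (ne Q) - 1) / (real (nv Q) - 2) \<le> lam H"
    using assms unfolding balanced_def by blast
  with True show ?thesis by (simp add: divide_le_eq mult.commute)
next
  case False
  then have "nv Q = 2" using assms(4) by simp
  have "is_graph H" using assms(1) unfolding balanced_def by simp
  then have "snd Q \<subseteq> {fst Q}"
    using edges_of_small_subgraph(1)[OF _ assms(2)] \<open>nv Q = 2\<close> by simp
  then have "ne Q \<le> 1" unfolding ne_def using card_mono[of "{fst Q}" "snd Q"] by simp
  with \<open>nv Q = 2\<close> show ?thesis by simp
qed

lemma copy_slack_nonneg:
  assumes bal: "balanced H" and e: "e \<in> snd H"
    and sub: "subgraph P (fst H, snd H - {e})" and proper: "P \<noteq> (fst H, snd H - {e})"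
  shows "copy_slack H e P \<ge> 0"
proof -
  have g: "is_graph H" using bal unfolding balanced_def by simp
  have lam: "lam H \<ge> 2" using balanced_lam_ge_2[OF bal] .
  have fin: "finite (fst P)" "finite (snd P)"
    using subgraph_finite[OF sub] g unfolding is_graph_def by auto
  have ecard: "card e = 2" and esub: "e \<subseteq> fst H" using g e unfolding is_graph_def by auto
  have eP: "e \<notin> snd P" and subH: "subgraph P H" using sub unfolding subgraph_def by auto
  show ?thesis
  proof (cases "e \<subseteq> fst P")
    case True
    define Q where "Q = (fst P, insert e (snd P))"
    have "subgraph Q H" using sub True e unfolding subgraph_def Q_def by auto
    moreover have "Q \<noteq> H"
    proof
      assume "Q = H"
      then have "P = (fst H, snd H - {e})" using eP unfolding Q_def by (auto simp: prod_eq_iff)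
      with proper show False ..
    qed
    moreover have "nv Q \<ge> 2" using card_mono[OF fin(1) True] ecard unfolding Q_def nv_def by simp
    ultimately have "real (ne Q) - 1 \<le> (real (nv Q) - 2) * lam H"
      using balanced_subgraph_bound[OF bal] by blast
    moreover have "card (fst P \<inter> e) = 2" using True ecard by (simp add: Int_absorb1)
    ultimately show ?thesis
      using eP fin(2) unfolding Q_def copy_slack_def ne_def nv_def by simp
  next
    case False
    have meet: "real (card (fst P \<inter> e)) \<le> 1"
    proof -
      have "fst P \<inter> e \<subset> e" using False by auto
      moreover have "finite e" using ecard by (metis card.infinite zero_neq_numeral)
      ultimately have "card (fst P \<inter> e) < 2" using ecard psubset_card_mono by metis
      then show ?thesis by simp
    qed
    show ?thesis
    proof (cases "nv P \<ge> 2")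
      case True
      have "P \<noteq> H" using False esub by auto
      then have "real (ne P) - 1 \<le> (real (nv P) - 2) * lam H"
        using balanced_subgraph_bound[OF bal subH _ True] by blast
      moreover have "real (card (fst P \<inter> e)) * lam H \<le> lam H"
        using mult_right_mono[OF meet] lam by simp
      ultimately show ?thesis using lam unfolding copy_slack_def left_diff_distrib by linarith
    next
      case False
      then have "snd P = {}" using edges_of_small_subgraph(2)[OF g subH] by fastforce
      moreover have "card (fst P \<inter> e) \<le> nv P" unfolding nv_def by (simp add: card_mono fin(1))
      ultimately show ?thesis using lam unfolding copy_slack_def ne_def by simp
    qed
  qed
qed

lemma copy_slack_ge_minus_one:
  assumes bal: "balanced H" and e: "e \<in> snd H" and sub: "subgraph P (fst H, snd H - {e})"
  shows "copy_slack H e P \<ge> -1"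
proof (cases "P = (fst H, snd H - {e})")
  case True
  have g: "is_graph H" using bal unfolding balanced_def by simp
  have "fst H \<inter> e = e" "card e = 2" using g e unfolding is_graph_def by auto
  then have "card (fst H \<inter> e) = 2" by simp
  moreover have "ne H \<ge> 1" "card (snd H - {e}) = ne H - 1"
    using e is_graph_finite_edges[OF g] unfolding ne_def by (auto simp: Suc_le_eq card_gt_0_iff)
  moreover have "(real (nv H) - 2) * lam H = real (ne H) - 2"
    using bal unfolding lam_def balanced_def by simp
  ultimately show ?thesis using True unfolding copy_slack_def by (simp add: nv_def ne_def of_nat_diff)
next
  case False
  then show ?thesis using copy_slack_nonneg[OF assms] by simp
qed

lemma inj_glue: "inj (glue es j)"
  unfolding inj_def glue_def by (auto split: if_splits)

lemma fst_glue_le: "fst (glue es j x) \<le> j"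
  unfolding glue_def by auto

lemma glue_unshared: "x \<notin> es j \<Longrightarrow> glue es j x = (j, x)"
  unfolding glue_def by auto

lemma glue_shared: "d \<ge> 1 \<Longrightarrow> x \<in> es (Suc d) \<Longrightarrow> glue es (Suc d) x = (d, x)"
  unfolding glue_def by auto

lemma glue_one: "glue es 1 x = (1, x)"
  unfolding glue_def by auto

lemma mem_fst_Hd: "p \<in> fst (Hd H es d) \<longleftrightarrow> (\<exists>j x. p = glue es j x \<and> 1 \<le> j \<and> j \<le> d \<and> x \<in> fst H)"
  unfolding Hd_def by auto

lemma mem_snd_Hd: "f \<in> snd (Hd H es d) \<longleftrightarrow> (\<exists>j h. f = glue es j ` h \<and> 1 \<le> j \<and> j \<le> d \<and> h \<in> snd H
   \<and> \<not> (j = 1 \<and> h = es 1) \<and> \<not> (2 \<le> j \<and> h = es j) \<and> \<not> (j < d \<and> h = es (Suc j)))"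
  unfolding Hd_def by auto

lemma fst_le_of_mem_Hd: "p \<in> fst (Hd H es d) \<Longrightarrow> fst p \<le> d"
  unfolding mem_fst_Hd by (metis fst_glue_le order_trans)

lemma Hd_edge_subset:
  assumes g: "is_graph H" and f: "f \<in> snd (Hd H es d)" shows "f \<subseteq> fst (Hd H es d)"
proof
  fix p assume "p \<in> f"
  obtain j h where "f = glue es j ` h" "1 \<le> j" "j \<le> d" "h \<in> snd H"
    using f unfolding mem_snd_Hd by blast
  moreover from this obtain x where "p = glue es j x" "x \<in> h" using \<open>p \<in> f\<close> by blast
  moreover have "h \<subseteq> fst H" using g \<open>h \<in> snd H\<close> unfolding is_graph_def by blast
  ultimately show "p \<in> fst (Hd H es d)" unfolding mem_fst_Hd by blast
qed

definition copy_edges :: "'a graph \<Rightarrow> (nat \<Rightarrow> 'a set) \<Rightarrow> nat \<Rightarrow> (nat \<times> 'a) set set" where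
  "copy_edges H es k = (\<lambda>h. glue es k ` h) ` (snd H - {es k})"

lemma Hd_0: "Hd H es 0 = ({}, {})"
  unfolding Hd_def by simp

lemma fst_Hd_Suc: "fst (Hd H es (Suc d)) = fst (Hd H es d) \<union> glue es (Suc d) ` fst H"
  unfolding mem_fst_Hd set_eq_iff Un_iff image_iff using le_Suc_eq by auto

lemma finite_fst_Hd: "finite (fst H) \<Longrightarrow> finite (fst (Hd H es d))"
  by (induction d) (simp_all add: Hd_0 fst_Hd_Suc)

lemma glue_shared_edge:
  assumes "edge_seq H es" "d \<ge> 1"
  shows "glue es d ` es (Suc d) = Pair d ` es (Suc d)"
  using assms unfolding edge_seq_def by (auto intro!: image_cong glue_unshared)

lemma glue_edge_ne_shared_edge:
  assumes g: "is_graph H" and h: "h \<in> snd H" and j: "j < d"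
  shows "glue es j ` h \<noteq> Pair d ` es (Suc d)"
proof -
  obtain x where "x \<in> h" using g h unfolding is_graph_def by fastforce
  moreover have "fst (glue es j x) \<noteq> d" using fst_glue_le[of es j x] j by simp
  ultimately have "glue es j x \<notin> Pair d ` es (Suc d)" "glue es j x \<in> glue es j ` h" by auto
  then show ?thesis by blast
qed

lemma shared_edge_mem_Hd:
  assumes g: "is_graph H" and es: "edge_seq H es" and d: "d \<ge> 1"
  shows "Pair d ` es (Suc d) \<in> snd (Hd H es d)"
proof -
  have e: "es (Suc d) \<in> snd H" "card (es (Suc d)) = 2" using edge_seq_edge[OF g es] by auto
  have "es d \<inter> es (Suc d) = {}" using es d unfolding edge_seq_def by simp
  then have "es (Suc d) \<noteq> es d" using e(2) by auto
  then have "glue es d ` es (Suc d) \<in> snd (Hd H es d)"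
    unfolding mem_snd_Hd using d e(1) by (intro exI[of _ d] exI[of _ "es (Suc d)"]) auto
  then show ?thesis using glue_shared_edge[OF es d] by simp
qed

lemma snd_Hd_Suc_subset:
  assumes g: "is_graph H" and es: "edge_seq H es"
  shows "snd (Hd H es (Suc d)) \<subseteq> (snd (Hd H es d) - {Pair d ` es (Suc d)}) \<union> copy_edges H es (Suc d)"
proof
  fix f assume "f \<in> snd (Hd H es (Suc d))"
  then obtain j h where f: "f = glue es j ` h" "1 \<le> j" "j \<le> Suc d" "h \<in> snd H"
    "\<not> (j = 1 \<and> h = es 1)" "\<not> (2 \<le> j \<and> h = es j)" "\<not> (j < Suc d \<and> h = es (Suc j))"
    unfolding mem_snd_Hd by blast
  show "f \<in> (snd (Hd H es d) - {Pair d ` es (Suc d)}) \<union> copy_edges H es (Suc d)"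
  proof (cases "j = Suc d")
    case True
    then have "h \<noteq> es (Suc d)" using f(5,6) by (cases d) auto
    then show ?thesis using f(1,4) True unfolding copy_edges_def by blast
  next
    case False
    then have "j \<le> d" using f(3) by simp
    then have "f \<in> snd (Hd H es d)"
      unfolding mem_snd_Hd using f(1,2,4-7) by (intro exI[of _ j] exI[of _ h] conjI) simp_all
    moreover have "f \<noteq> Pair d ` es (Suc d)"
    proof (cases "j < d")
      case True
      then show ?thesis using glue_edge_ne_shared_edge[OF g f(4) True] f(1) by simp
    next
      case False
      then have "j = d" using \<open>j \<le> d\<close> by simp
      show ?thesis
      proof
        assume "f = Pair d ` es (Suc d)"
        then have "glue es d ` h = glue es d ` es (Suc d)"
          using f(1,2) glue_shared_edge[OF es] \<open>j = d\<close> by simp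
        then have "h = es (Suc d)" by (simp add: inj_image_eq_iff[OF inj_glue])
        then show False using f(7) \<open>j = d\<close> by simp
      qed
    qed
    ultimately show ?thesis by blast
  qed
qed

text \<open>For \<open>d = 0\<close> the removed edge is absent anyway, so this also describes \<open>H\<^sub>1\<close>.\<close>
lemma snd_Hd_Suc:
  assumes g: "is_graph H" and es: "edge_seq H es"
  shows "snd (Hd H es (Suc d)) = (snd (Hd H es d) - {Pair d ` es (Suc d)}) \<union> copy_edges H es (Suc d)"
proof (rule equalityI[OF snd_Hd_Suc_subset[OF g es] subsetI])
  fix f assume f: "f \<in> (snd (Hd H es d) - {Pair d ` es (Suc d)}) \<union> copy_edges H es (Suc d)"
  show "f \<in> snd (Hd H es (Suc d))"
  proof (cases "f \<in> copy_edges H es (Suc d)")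
    case True
    then obtain h where "f = glue es (Suc d) ` h" "h \<in> snd H" "h \<noteq> es (Suc d)"
      unfolding copy_edges_def by blast
    then show ?thesis unfolding mem_snd_Hd by (intro exI[of _ "Suc d"] exI[of _ h]) auto
  next
    case False
    then have old: "f \<in> snd (Hd H es d)" and "f \<noteq> Pair d ` es (Suc d)" using f by auto
    from old obtain j h where jh: "f = glue es j ` h" "1 \<le> j" "j \<le> d" "h \<in> snd H"
      "\<not> (j = 1 \<and> h = es 1)" "\<not> (2 \<le> j \<and> h = es j)" "\<not> (j < d \<and> h = es (Suc j))"
      unfolding mem_snd_Hd by blast
    have "\<not> (j = d \<and> h = es (Suc d))"
    proof
      assume "j = d \<and> h = es (Suc d)"
      then have "f = Pair d ` es (Suc d)" using jh(1,2) glue_shared_edge[OF es] by simp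
      with \<open>f \<noteq> Pair d ` es (Suc d)\<close> show False ..
    qed
    with jh show ?thesis unfolding mem_snd_Hd by (intro exI[of _ j] exI[of _ h]) auto
  qed
qed

lemma fst_Hd_inter_copy:
  assumes es: "edge_seq H es" and d: "d \<ge> 1" and A: "A \<subseteq> fst H"
  shows "fst (Hd H es d) \<inter> glue es (Suc d) ` A = glue es (Suc d) ` (A \<inter> es (Suc d))"
proof (intro equalityI subsetI)
  fix p assume p: "p \<in> fst (Hd H es d) \<inter> glue es (Suc d) ` A"
  then obtain x where x: "x \<in> A" "p = glue es (Suc d) x" by auto
  have "x \<in> es (Suc d)"
    using fst_le_of_mem_Hd[of p] p glue_unshared[of x es "Suc d"] x(2) by fastforce
  then show "p \<in> glue es (Suc d) ` (A \<inter> es (Suc d))" using x by blast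
next
  fix p assume "p \<in> glue es (Suc d) ` (A \<inter> es (Suc d))"
  then obtain x where x: "x \<in> A" "x \<in> es (Suc d)" "p = glue es (Suc d) x" by auto
  have "x \<notin> es d" using es d x(2) unfolding edge_seq_def by auto
  then have "p = glue es d x"
    using glue_shared[of d x es, OF d x(2)] glue_unshared[of x es d] x(3) by simp
  moreover have "glue es d x \<in> fst (Hd H es d)"
    unfolding mem_fst_Hd using d x(1) A by (intro exI[of _ d] exI[of _ x]) auto
  moreover have "p \<in> glue es (Suc d) ` A" using x(1,3) by blast
  ultimately show "p \<in> fst (Hd H es d) \<inter> glue es (Suc d) ` A" by simp
qed

lemma snd_Hd_disjoint_copy_edges:
  assumes g: "is_graph H" and es: "edge_seq H es"
  shows "snd (Hd H es d) \<inter> copy_edges H es (Suc d) = {}"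
proof (rule ccontr)
  assume "snd (Hd H es d) \<inter> copy_edges H es (Suc d) \<noteq> {}"
  then obtain h where old: "glue es (Suc d) ` h \<in> snd (Hd H es d)"
    and h: "h \<in> snd H" "h \<noteq> es (Suc d)"
    unfolding copy_edges_def by blast
  have "card h = 2" "finite h" "card (es (Suc d)) = 2"
    using g h(1) edge_seq_edge[OF g es, of "Suc d"] unfolding is_graph_def
    by (auto intro: card_ge_0_finite)
  then have "\<not> h \<subseteq> es (Suc d)" using h(2) card_subset_eq
    by (metis card.infinite zero_neq_numeral)
  then obtain x where x: "x \<in> h" "x \<notin> es (Suc d)" by auto
  then have "(Suc d, x) \<in> fst (Hd H es d)"
    using Hd_edge_subset[OF g old] glue_unshared[of x es "Suc d", OF x(2)] by (metis image_eqI subsetD)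
  then show False using fst_le_of_mem_Hd by fastforce
qed

definition copy_trace :: "'a graph \<Rightarrow> (nat \<Rightarrow> 'a set) \<Rightarrow> nat \<Rightarrow> (nat \<times> 'a) graph \<Rightarrow> 'a graph" where
  "copy_trace H es k F =
     ({x \<in> fst H. glue es k x \<in> fst F}, {h \<in> snd H - {es k}. glue es k ` h \<in> snd F})"

lemma copy_trace_subgraph:
  assumes "is_graph H" "subgraph F K"
  shows "subgraph (copy_trace H es k F) (fst H, snd H - {es k})"
  using assms unfolding subgraph_def copy_trace_def is_graph_def by fastforce

lemma vertices_in_copy: "fst F \<inter> glue es k ` fst H = glue es k ` fst (copy_trace H es k F)"
  unfolding copy_trace_def by auto

lemma edges_in_copy:
  "snd F \<inter> copy_edges H es k = (\<lambda>h. glue es k ` h) ` snd (copy_trace H es k F)"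
  unfolding copy_trace_def copy_edges_def by auto

lemma nv_copy_trace: "nv (copy_trace H es k F) = card (fst F \<inter> glue es k ` fst H)"
  unfolding vertices_in_copy nv_def by (simp add: card_image inj_on_subset[OF inj_glue])

lemma ne_copy_trace: "ne (copy_trace H es k F) = card (snd F \<inter> copy_edges H es k)"
proof -
  have "inj_on (\<lambda>h. glue es k ` h) A" for A
    unfolding inj_on_def by (simp add: inj_image_eq_iff[OF inj_glue])
  then show ?thesis unfolding edges_in_copy ne_def by (simp add: card_image)
qed

lemma copy_trace_full:
  assumes "copy_trace H es k F = (fst H, snd H - {es k})"
  shows "glue es k ` fst H \<subseteq> fst F" "copy_edges H es k \<subseteq> snd F"
  using assms unfolding copy_trace_def copy_edges_def prod_eq_iff by auto

lemma root_subset_fst_Hd: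
  assumes "is_graph H" "edge_seq H es" "d \<ge> 1"
  shows "root es \<subseteq> fst (Hd H es d)"
proof -
  have "root es = glue es 1 ` es 1" unfolding root_def glue_one by simp
  also have "\<dots> \<subseteq> glue es 1 ` fst H" using edge_seq_edge(2)[OF assms(1,2)] by auto
  also have "\<dots> \<subseteq> fst (Hd H es d)" using assms(3) by (fastforce simp: mem_fst_Hd)
  finally show ?thesis .
qed

lemma Hd_one:
  assumes "is_graph H" "edge_seq H es"
  shows "Hd H es 1 = (glue es 1 ` fst H, copy_edges H es 1)"
  using fst_Hd_Suc[of H es 0] snd_Hd_Suc[OF assms, of 0] by (simp add: Hd_0 prod_eq_iff)

lemma slack_Hd_one:
  assumes bal: "balanced H" and es: "edge_seq H es"
    and sub: "subgraph F (Hd H es 1)" and root: "root es \<subseteq> fst F"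
  shows "slack H F \<ge> -1" and "F \<noteq> Hd H es 1 \<Longrightarrow> slack H F \<ge> 0"
proof -
  have g: "is_graph H" using bal unfolding balanced_def by simp
  define P where "P = copy_trace H es 1 F"
  have P: "subgraph P (fst H, snd H - {es 1})"
    unfolding P_def using copy_trace_subgraph[OF g sub] .
  have "fst F \<subseteq> glue es 1 ` fst H" "snd F \<subseteq> copy_edges H es 1"
    using sub Hd_one[OF g es] unfolding subgraph_def by auto
  then have "nv P = nv F" "ne P = ne F"
    unfolding P_def nv_copy_trace ne_copy_trace by (simp_all add: Int_absorb2 nv_def ne_def)
  moreover have "card (fst P \<inter> es 1) = 2"
  proof -
    have "es 1 \<subseteq> fst P"
      using root edge_seq_edge(2)[OF g es] unfolding P_def copy_trace_def root_def glue_one by auto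
    then show ?thesis using edge_seq_edge(3)[OF g es] by (simp add: Int_absorb1)
  qed
  ultimately have slack: "slack H F = copy_slack H (es 1) P"
    unfolding slack_def copy_slack_def by simp
  show "slack H F \<ge> -1"
    unfolding slack using copy_slack_ge_minus_one[OF bal edge_seq_edge(1)[OF g es] P] by simp
  assume "F \<noteq> Hd H es 1"
  moreover have "F = Hd H es 1" if "P = (fst H, snd H - {es 1})"
    using copy_trace_full[OF that[unfolded P_def]] sub Hd_one[OF g es]
    unfolding subgraph_def by (auto simp: prod_eq_iff)
  ultimately show "slack H F \<ge> 0"
    unfolding slack using copy_slack_nonneg[OF bal edge_seq_edge(1)[OF g es] P] by blast
qed

definition graph_inter :: "'b graph \<Rightarrow> 'b graph \<Rightarrow> 'b graph" where
  "graph_inter F G = (fst F \<inter> fst G, snd F \<inter> snd G)"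

lemma graph_inter_subgraph:
  "subgraph F K \<Longrightarrow> (\<forall>f\<in>snd G. f \<subseteq> fst G) \<Longrightarrow> subgraph (graph_inter F G) G"
  unfolding subgraph_def graph_inter_def by auto

lemma slack_Hd_Suc_split:
  assumes g: "is_graph H" and es: "edge_seq H es" and d: "d \<ge> 1"
    and sub: "subgraph F (Hd H es (Suc d))"
  shows "slack H F = slack H (graph_inter F (Hd H es d))
           + copy_slack H (es (Suc d)) (copy_trace H es (Suc d) F)"
proof -
  define W where "W = fst (Hd H es d)"
  define P where "P = copy_trace H es (Suc d) F"
  have "finite (fst (Hd H es (Suc d)))" using finite_fst_Hd g unfolding is_graph_def by blast
  then have fin: "finite (fst F)" "finite (snd F)" using subgraph_finite[OF sub] by auto
  have vertices: "card (fst F) + card (fst P \<inter> es (Suc d)) = card (fst F \<inter> W) + nv P"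
  proof -
    define B where "B = glue es (Suc d) ` fst P"
    have B: "B = fst F \<inter> glue es (Suc d) ` fst H"
      unfolding B_def P_def vertices_in_copy ..
    have "fst F = (fst F \<inter> W) \<union> B"
      using sub fst_Hd_Suc[of H es d] unfolding subgraph_def W_def B by blast
    moreover have "(fst F \<inter> W) \<inter> B = glue es (Suc d) ` (fst P \<inter> es (Suc d))"
      using fst_Hd_inter_copy[OF es d, of "fst P"]
      unfolding W_def B_def P_def copy_trace_def by auto
    moreover have "card (fst F \<inter> W) + card B = card ((fst F \<inter> W) \<union> B) + card ((fst F \<inter> W) \<inter> B)"
      by (rule card_Un_Int) (use fin(1) B in simp_all)
    ultimately show ?thesis
      unfolding B_def nv_def by (simp add: card_image inj_on_subset[OF inj_glue])
  qed
  have edges: "card (snd F) = card (snd F \<inter> snd (Hd H es d)) + ne P"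
  proof -
    have "snd F = (snd F \<inter> snd (Hd H es d)) \<union> (snd F \<inter> copy_edges H es (Suc d))"
      using sub snd_Hd_Suc[OF g es, of d] unfolding subgraph_def by blast
    moreover have "card ((snd F \<inter> snd (Hd H es d)) \<union> (snd F \<inter> copy_edges H es (Suc d)))
        = card (snd F \<inter> snd (Hd H es d)) + card (snd F \<inter> copy_edges H es (Suc d))"
      by (rule card_Un_disjoint) (use fin(2) snd_Hd_disjoint_copy_edges[OF g es, of d] in auto)
    ultimately show ?thesis unfolding P_def ne_copy_trace by simp
  qed
  define G where "G = graph_inter F (Hd H es d)"
  have nv_F: "real (nv F) - 2 = (real (nv G) - 2) + (real (nv P) - real (card (fst P \<inter> es (Suc d))))"
    and ne_F: "real (ne F) = real (ne G) + real (ne P)"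
    using vertices edges unfolding G_def graph_inter_def W_def nv_def ne_def by simp_all
  show ?thesis
    unfolding slack_def copy_slack_def P_def[symmetric] G_def[symmetric] nv_F ne_F
    by (simp add: algebra_simps)
qed

lemma Hd_Suc_eq_if_parts_full:
  assumes g: "is_graph H" and es: "edge_seq H es" and sub: "subgraph F (Hd H es (Suc d))"
    and old: "fst (Hd H es d) \<subseteq> fst F" "snd (Hd H es d) - {Pair d ` es (Suc d)} \<subseteq> snd F"
    and new: "copy_trace H es (Suc d) F = (fst H, snd H - {es (Suc d)})"
  shows "F = Hd H es (Suc d)"
  using sub old copy_trace_full[OF new] fst_Hd_Suc[of H es d] snd_Hd_Suc[OF g es, of d]
  unfolding subgraph_def by (auto simp: prod_eq_iff)

lemma shared_edge_notin_subgraph: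
  assumes g: "is_graph H" and es: "edge_seq H es" and d: "d \<ge> 1"
    and sub: "subgraph F (Hd H es (Suc d))"
  shows "Pair d ` es (Suc d) \<notin> snd F"
proof
  assume "Pair d ` es (Suc d) \<in> snd F"
  then have "Pair d ` es (Suc d) \<in> copy_edges H es (Suc d)"
    using sub unfolding subgraph_def snd_Hd_Suc[OF g es] by blast
  then show False
    using snd_Hd_disjoint_copy_edges[OF g es, of d] shared_edge_mem_Hd[OF g es d] by blast
qed

lemma shared_edge_subset_if_covered:
  assumes "d \<ge> 1" "es (Suc d) \<subseteq> fst (copy_trace H es (Suc d) F)"
  shows "Pair d ` es (Suc d) \<subseteq> fst F"
  using assms glue_shared[of d _ es, OF assms(1)] unfolding copy_trace_def by auto

lemma slack_insert_edge:
  assumes "finite (snd G)" "f \<notin> snd G"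
  shows "slack H (fst G, insert f (snd G)) = slack H G - 1"
  using assms unfolding slack_def nv_def ne_def by simp

text \<open>If \<open>e\<^sub>d\<^sub>+\<^sub>1\<close> lies in \<open>F\<close>, apply the hypothesis to the old part with the edge \<open>e\<^sub>d\<^sub>+\<^sub>1\<close> of \<open>H\<^sub>d\<close>
  added; otherwise the old part is a proper subgraph of \<open>H\<^sub>d\<close> and the new copy is not full.\<close>
lemma slack_Hd_Suc:
  assumes bal: "balanced H" and es: "edge_seq H es" and d: "d \<ge> 1"
    and IH: "\<And>G. subgraph G (Hd H es d) \<Longrightarrow> root es \<subseteq> fst G \<Longrightarrow>
               slack H G \<ge> -1 \<and> (G \<noteq> Hd H es d \<longrightarrow> slack H G \<ge> 0)"
    and sub: "subgraph F (Hd H es (Suc d))" and root: "root es \<subseteq> fst F"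
  shows "slack H F \<ge> -1 \<and> (F \<noteq> Hd H es (Suc d) \<longrightarrow> slack H F \<ge> 0)"
proof -
  have g: "is_graph H" using bal unfolding balanced_def by simp
  define G where "G = graph_inter F (Hd H es d)"
  define P where "P = copy_trace H es (Suc d) F"
  define e' where "e' = Pair d ` es (Suc d)"
  have e: "es (Suc d) \<in> snd H" using edge_seq_edge[OF g es] by simp
  have split: "slack H F = slack H G + copy_slack H (es (Suc d)) P"
    unfolding G_def P_def using slack_Hd_Suc_split[OF g es d sub] .
  have P: "subgraph P (fst H, snd H - {es (Suc d)})"
    unfolding P_def using copy_trace_subgraph[OF g sub] .
  have G: "subgraph G (Hd H es d)"
    using graph_inter_subgraph[OF sub] Hd_edge_subset[OF g] unfolding G_def by blast
  have root_G: "root es \<subseteq> fst G"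
    using root root_subset_fst_Hd[OF g es d] unfolding G_def graph_inter_def by auto
  have e'_Hd: "e' \<in> snd (Hd H es d)" unfolding e'_def using shared_edge_mem_Hd[OF g es d] .
  have e'_G: "e' \<notin> snd G"
    using shared_edge_notin_subgraph[OF g es d sub] unfolding G_def graph_inter_def e'_def by simp
  show ?thesis
  proof (cases "es (Suc d) \<subseteq> fst P")
    case True
    define G' where "G' = (fst G, insert e' (snd G))"
    have "e' \<subseteq> fst F" using shared_edge_subset_if_covered[OF d True[unfolded P_def]] e'_def by simp
    then have "subgraph G' (Hd H es d)"
      using G e'_Hd Hd_edge_subset[OF g e'_Hd] unfolding G'_def subgraph_def G_def graph_inter_def
      by auto
    then have IH': "slack H G' \<ge> -1" "G' \<noteq> Hd H es d \<Longrightarrow> slack H G' \<ge> 0"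
      using IH root_G unfolding G'_def by auto
    have "finite (snd G)"
      using subgraph_finite(2)[OF G] finite_fst_Hd g unfolding is_graph_def by blast
    then have slack_G: "slack H G = slack H G' + 1"
      using slack_insert_edge[OF _ e'_G, of H] unfolding G'_def by linarith
    have "slack H F \<ge> 0" if "F \<noteq> Hd H es (Suc d)"
    proof (cases "G' = Hd H es d")
      case True
      then have "fst G = fst (Hd H es d)" "insert e' (snd G) = snd (Hd H es d)"
        unfolding G'_def by (metis fst_conv, metis snd_conv)
      then have "fst (Hd H es d) \<subseteq> fst F" "snd (Hd H es d) - {e'} \<subseteq> snd F"
        unfolding G_def graph_inter_def by auto
      then have "P \<noteq> (fst H, snd H - {es (Suc d)})"
        using Hd_Suc_eq_if_parts_full[OF g es sub] that unfolding P_def e'_def by blast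
      then show ?thesis
        using split slack_G IH'(1) copy_slack_nonneg[OF bal e P] by linarith
    next
      case False
      then show ?thesis
        using split slack_G IH'(2) copy_slack_ge_minus_one[OF bal e P] by linarith
    qed
    then show ?thesis
      using split slack_G IH'(1) copy_slack_ge_minus_one[OF bal e P] by linarith
  next
    case False
    then have "P \<noteq> (fst H, snd H - {es (Suc d)})" using edge_seq_edge(2)[OF g es, of "Suc d"] by auto
    moreover have "G \<noteq> Hd H es d" using e'_Hd e'_G by auto
    ultimately show ?thesis
      using split IH[OF G root_G] copy_slack_nonneg[OF bal e P] by linarith
  qed
qed

lemma slack_Hd:
  assumes bal: "balanced H" and es: "edge_seq H es" and "d \<ge> 1"
    and "subgraph F (Hd H es d)" and "root es \<subseteq> fst F"
  shows "slack H F \<ge> -1 \<and> (F \<noteq> Hd H es d \<longrightarrow> slack H F \<ge> 0)"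
  using assms(3-)
proof (induction d arbitrary: F rule: nat_induct_at_least)
  case base
  show ?case using slack_Hd_one[OF bal es base.prems] by simp
next
  case (Suc d)
  show ?case using slack_Hd_Suc[OF bal es Suc.hyps Suc.IH Suc.prems] .
qed

theorem lemma2p5:
  fixes H :: "'a graph" and es :: "nat \<Rightarrow> 'a set" and d :: nat
    and F :: "(nat \<times> 'a) graph"
  assumes "balanced H" and "edge_seq H es" and "d \<ge> 1"
    and "subgraph F (Hd H es d)" and "F \<noteq> Hd H es d"
    and "root es \<subseteq> fst F"
  shows "real (ne F) \<le> (real (nv F) - 2) * lam H"
  using slack_Hd[OF assms(1-4,6)] assms(5) unfolding slack_def by simp

end
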